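(* Let $M$ be an $n\times d$ matrix (a database). For every nonempty subset of columns $J\subseteq[d]$, every family of thresholds $\{t_j\}_{j\in J}\subseteq[0,1]$, and every $j^\star\in J$, \[ Q_J\Big(\prod_{j\in J} t_j\Big)\;\le\;\sum_{j\in J} Q_j(t_j)\;+\;\sum_{j\in J\setminus\{j^\star\}} t_j\,|V_j| . \]
   Context: $M$ has $n$ rows (users) and $d$ columns (features); $M_{ij}$ is the value of feature $j$ for user $i$. For a column $j$, $V_j=\{M_{ij}: i\in[n]\}$, and for $J\subseteq[d]$, $V_J=\prod_{j\in J}V_j$ (Cartesian product). The empirical joint distribution of the columns $J$ is $p_J(v)=\frac{1}{n}\,|\{i\in[n]: M_{ij}=v_j \text{ for all } j\in J\}|$ for $v\in V_J$. The exposure of columns $J$ at threshold $t$ is \[ Q_J(t)=\sum_{v\in V_J} p_J(v)\,\mathbf 1[p_J(v)<t], \] i.e. the fraction of users whose restricted row (to columns $J$) is shared by fewer than $tn$ users. For a single column $j$, $Q_j:=Q_{\{j\}}$ and $p_j:=p_{\{j\}}$. *)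

theory Defs
  imports Complex_Main "HOL-Library.FuncSet"
begin

text \<open>A database: n rows (users) indexed by {..<n}, d columns (features) indexed by {..<d};
  M i j is the value of feature j for user i.\<close>

definition colvals :: "nat \<Rightarrow> (nat \<Rightarrow> nat \<Rightarrow> 'a) \<Rightarrow> nat \<Rightarrow> 'a set" where
  "colvals n M j = {M i j | i. i < n}"

definition prodvals :: "nat \<Rightarrow> (nat \<Rightarrow> nat \<Rightarrow> 'a) \<Rightarrow> nat set \<Rightarrow> (nat \<Rightarrow> 'a) set" where
  "prodvals n M J = PiE J (colvals n M)"

definition pJ :: "nat \<Rightarrow> (nat \<Rightarrow> nat \<Rightarrow> 'a) \<Rightarrow> nat set \<Rightarrow> (nat \<Rightarrow> 'a) \<Rightarrow> real" where
  "pJ n M J v = real (card {i. i < n \<and> (\<forall>j\<in>J. M i j = v j)}) / real n"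

definition QJ :: "nat \<Rightarrow> (nat \<Rightarrow> nat \<Rightarrow> 'a) \<Rightarrow> nat set \<Rightarrow> real \<Rightarrow> real" where
  "QJ n M J t = (\<Sum>v\<in>prodvals n M J. pJ n M J v * (if pJ n M J v < t then 1 else 0))"

end

theory Submission
  imports Defs
begin

text \<open>Call a row rare for columns S at threshold T if fewer than T n rows agree with it on S, so that
  Q_S(T) is the fraction of rare rows. Adding a column a to S and multiplying the threshold by t,
  a row can only become rare if it was rare already or if its class shrinks by a factor below t
  when refined by column a. Inside one S-class of size c, the shrinking rows lie in at most |V_a|
  subclasses, each of size below t c, so at most a fraction t |V_a| of the class shrinks; hence
  Q_{S+a}(t T) \<le> Q_S(T) + t |V_a|. Induction over the columns other than j* gives the bound.\<close>

definition agree_on :: "(nat \<Rightarrow> nat \<Rightarrow> 'a) \<Rightarrow> nat set \<Rightarrow> nat \<Rightarrow> nat \<Rightarrow> bool" where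
  "agree_on M S i i' \<longleftrightarrow> (\<forall>j\<in>S. M i j = M i' j)"

definition class_card :: "nat \<Rightarrow> (nat \<Rightarrow> nat \<Rightarrow> 'a) \<Rightarrow> nat set \<Rightarrow> nat \<Rightarrow> nat" where
  "class_card n M S i = card {i'. i' < n \<and> agree_on M S i' i}"

definition rare_rows :: "nat \<Rightarrow> (nat \<Rightarrow> nat \<Rightarrow> 'a) \<Rightarrow> nat set \<Rightarrow> real \<Rightarrow> nat set" where
  "rare_rows n M S T = {i. i < n \<and> real (class_card n M S i) < T * real n}"

definition shrinking_rows :: "nat \<Rightarrow> (nat \<Rightarrow> nat \<Rightarrow> 'a) \<Rightarrow> nat set \<Rightarrow> nat \<Rightarrow> real \<Rightarrow> nat set" where
  "shrinking_rows n M S a t =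
     {i. i < n \<and> real (class_card n M (insert a S) i) < t * real (class_card n M S i)}"

lemma agree_on_sym: "agree_on M S i i' \<longleftrightarrow> agree_on M S i' i"
  unfolding agree_on_def by auto

lemma class_card_cong: "agree_on M S i i' \<Longrightarrow> class_card n M S i = class_card n M S i'"
  unfolding class_card_def agree_on_def by (rule arg_cong[where f = card]) auto

lemma class_card_pos: "i < n \<Longrightarrow> 0 < class_card n M S i"
  unfolding class_card_def by (rule card_gt_0_iff[THEN iffD2]) (auto simp: agree_on_def)

lemma finite_colvals: "finite (colvals n M j)"
proof -
  have "colvals n M j = (\<lambda>i. M i j) ` {..<n}" unfolding colvals_def by auto
  then show ?thesis by simp
qed

lemma QJ_nonneg: "0 \<le> QJ n M S T"
  unfolding QJ_def pJ_def by (intro sum_nonneg) auto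

lemma QJ_eq_card_rare_rows:
  assumes "finite S"
  shows "QJ n M S T = real (card (rare_rows n M S T)) / real n"
proof (cases "n = 0")
  case True
  then show ?thesis unfolding QJ_def pJ_def rare_rows_def by simp
next
  case False
  define cls where "cls v = {i. i < n \<and> (\<forall>j\<in>S. M i j = v j)}" for v
  have fin_prodvals: "finite (prodvals n M S)"
    unfolding prodvals_def using assms finite_colvals by (intro finite_PiE) auto
  have rare_fibre: "{i \<in> rare_rows n M S T. restrict (M i) S = v} =
      (if pJ n M S v < T then cls v else {})" if "v \<in> prodvals n M S" for v
  proof -
    have "v \<in> extensional S" using that unfolding prodvals_def by (simp add: PiE_def)
    then have restrict_eq: "restrict (M i) S = v \<longleftrightarrow> (\<forall>j\<in>S. M i j = v j)" for i
      by (auto simp: extensional_def)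
    have "class_card n M S i = card (cls v)" if "i \<in> cls v" for i
      unfolding class_card_def cls_def using that
      by (intro arg_cong[where f = card]) (auto simp: agree_on_def cls_def)
    moreover have "pJ n M S v < T \<longleftrightarrow> real (card (cls v)) < T * real n"
      using \<open>n \<noteq> 0\<close> unfolding pJ_def cls_def by (simp add: divide_less_eq)
    ultimately show ?thesis
      unfolding rare_rows_def restrict_eq
      by (auto simp: cls_def) (metis (mono_tags, lifting) mem_Collect_eq)
  qed
  have "real (card (rare_rows n M S T)) / real n = (\<Sum>i\<in>rare_rows n M S T. 1 / real n)"
    by simp
  also have "\<dots> = (\<Sum>v\<in>prodvals n M S.
      \<Sum>i\<in>{i \<in> rare_rows n M S T. restrict (M i) S = v}. 1 / real n)"
    by (rule sum.group[symmetric])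
      (use fin_prodvals in \<open>auto simp: rare_rows_def prodvals_def colvals_def\<close>)
  also have "\<dots> = QJ n M S T"
    unfolding QJ_def by (intro sum.cong refl) (simp add: rare_fibre pJ_def cls_def)
  finally show ?thesis ..
qed

lemma card_shrinking_rows_in_class:
  assumes "0 \<le> t"
  shows "real (card {i \<in> shrinking_rows n M S a t. agree_on M S i i'})
    \<le> real (card (colvals n M a)) * (t * real (class_card n M S i'))"
proof -
  define E where "E = shrinking_rows n M S a t"
  define A where "A x = {i \<in> E. agree_on M S i i' \<and> M i a = x}" for x
  have fin_A: "finite (A x)" for x unfolding A_def E_def shrinking_rows_def by simp
  have "card {i \<in> E. agree_on M S i i'} \<le> card (\<Union>x\<in>colvals n M a. A x)"
    by (intro card_mono finite_UN_I finite_colvals fin_A)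
      (auto simp: A_def E_def shrinking_rows_def colvals_def)
  also have "\<dots> \<le> (\<Sum>x\<in>colvals n M a. card (A x))"
    by (rule card_UN_le[OF finite_colvals])
  finally have "real (card {i \<in> E. agree_on M S i i'}) \<le> (\<Sum>x\<in>colvals n M a. real (card (A x)))"
    by (metis of_nat_le_iff of_nat_sum)
  also have "\<dots> \<le> (\<Sum>x\<in>colvals n M a. t * real (class_card n M S i'))"
  proof (rule sum_mono)
    fix x
    show "real (card (A x)) \<le> t * real (class_card n M S i')"
    proof (cases "A x = {}")
      case True
      then show ?thesis using assms by simp
    next
      case False
      then obtain i0 where "i0 \<in> A x" by blast
      then have i0: "i0 < n" "agree_on M S i0 i'" "M i0 a = x"
        "real (class_card n M (insert a S) i0) < t * real (class_card n M S i0)"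
        unfolding A_def E_def shrinking_rows_def by auto
      have "A x \<subseteq> {i. i < n \<and> agree_on M (insert a S) i i0}"
        using i0 unfolding A_def E_def shrinking_rows_def agree_on_def by auto
      then have "card (A x) \<le> class_card n M (insert a S) i0"
        unfolding class_card_def by (intro card_mono) auto
      then have "real (card (A x)) \<le> real (class_card n M (insert a S) i0)" by simp
      moreover have "real (class_card n M (insert a S) i0) < t * real (class_card n M S i')"
        using i0(4) class_card_cong[OF i0(2), of n] by simp
      ultimately show ?thesis by linarith
    qed
  qed
  finally show ?thesis unfolding E_def by simp
qed

lemma sum_inverse_class_card:
  assumes "i < n"
  shows "(\<Sum>i'<n. if agree_on M S i i' then 1 / real (class_card n M S i') else 0) = 1"
proof -
  have "(\<Sum>i'<n. if agree_on M S i i' then 1 / real (class_card n M S i') else 0)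
      = (\<Sum>i'\<in>{i'. i' < n \<and> agree_on M S i' i}. 1 / real (class_card n M S i))"
    by (subst sum.inter_filter[symmetric])
      (auto intro!: sum.cong simp: lessThan_def agree_on_sym class_card_cong[of M S _ i])
  also have "\<dots> = 1"
    using assms unfolding class_card_def by (auto simp: agree_on_def)
  finally show ?thesis .
qed

text \<open>Each row is spread as weight 1/c over the c rows of its S-class, which turns the per-class
  bound into a global one.\<close>

lemma card_shrinking_rows_le:
  assumes "0 \<le> t"
  shows "real (card (shrinking_rows n M S a t)) \<le> t * real (card (colvals n M a)) * real n"
proof -
  define E where "E = shrinking_rows n M S a t"
  define w where "w i i' = (if agree_on M S i i' then 1 / real (class_card n M S i') else 0)" for i i'
  have fin_E: "finite E" unfolding E_def shrinking_rows_def by simp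
  have "real (card E) = (\<Sum>i\<in>E. \<Sum>i'<n. w i i')"
    unfolding w_def by (simp add: sum_inverse_class_card E_def shrinking_rows_def)
  also have "\<dots> = (\<Sum>i'<n. real (card {i \<in> E. agree_on M S i i'}) / real (class_card n M S i'))"
    unfolding w_def by (subst sum.swap) (simp add: sum.inter_filter[symmetric] fin_E)
  also have "\<dots> \<le> (\<Sum>i'<n. real (card (colvals n M a)) * (t * real (class_card n M S i'))
      / real (class_card n M S i'))"
    unfolding E_def by (intro sum_mono divide_right_mono card_shrinking_rows_in_class assms) auto
  also have "\<dots> = (\<Sum>i'<n. real (card (colvals n M a)) * t)"
    by (intro sum.cong refl) (simp add: class_card_pos less_imp_neq[symmetric])
  finally show ?thesis unfolding E_def by (simp add: algebra_simps)
qed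

lemma rare_rows_insert_subset:
  assumes "0 \<le> t"
  shows "rare_rows n M (insert a S) (t * T) \<subseteq> rare_rows n M S T \<union> shrinking_rows n M S a t"
proof
  fix i assume rare: "i \<in> rare_rows n M (insert a S) (t * T)"
  show "i \<in> rare_rows n M S T \<union> shrinking_rows n M S a t"
  proof (rule ccontr)
    assume "i \<notin> rare_rows n M S T \<union> shrinking_rows n M S a t"
    then have "T * real n \<le> real (class_card n M S i)"
      and "t * real (class_card n M S i) \<le> real (class_card n M (insert a S) i)"
      using rare unfolding rare_rows_def shrinking_rows_def by auto
    then have "t * T * real n \<le> real (class_card n M (insert a S) i)"
      using mult_left_mono[OF _ assms] by (fastforce simp: mult.assoc)
    then show False using rare unfolding rare_rows_def by simp
  qed
qed

lemma QJ_insert_le: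
  assumes "finite S" and "0 \<le> t"
  shows "QJ n M (insert a S) (t * T) \<le> QJ n M S T + t * real (card (colvals n M a))"
proof -
  have "card (rare_rows n M (insert a S) (t * T))
      \<le> card (rare_rows n M S T \<union> shrinking_rows n M S a t)"
    by (intro card_mono rare_rows_insert_subset assms) (simp add: rare_rows_def shrinking_rows_def)
  also have "\<dots> \<le> card (rare_rows n M S T) + card (shrinking_rows n M S a t)"
    by (rule card_Un_le)
  finally have "real (card (rare_rows n M (insert a S) (t * T)))
      \<le> real (card (rare_rows n M S T)) + t * real (card (colvals n M a)) * real n"
    using card_shrinking_rows_le[OF assms(2), of n M S a] by linarith
  then have "real (card (rare_rows n M (insert a S) (t * T))) / real n
      \<le> (real (card (rare_rows n M S T)) + t * real (card (colvals n M a)) * real n) / real n"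
    by (rule divide_right_mono) simp
  also have "\<dots> \<le> real (card (rare_rows n M S T)) / real n + t * real (card (colvals n M a))"
    using assms(2) by (cases "n = 0") (simp_all add: add_divide_distrib)
  finally show ?thesis using assms(1) by (simp add: QJ_eq_card_rare_rows)
qed

lemma QJ_insert_prod_le:
  fixes t :: "nat \<Rightarrow> real"
  assumes "finite R" and "j0 \<notin> R" and "\<forall>j\<in>insert j0 R. 0 \<le> t j"
  shows "QJ n M (insert j0 R) (\<Prod>j\<in>insert j0 R. t j)
    \<le> QJ n M {j0} (t j0) + (\<Sum>j\<in>R. t j * real (card (colvals n M j)))"
  using assms
proof (induction R rule: finite_induct)
  case empty
  then show ?case by simp
next
  case (insert a R)
  have "QJ n M (insert j0 (insert a R)) (\<Prod>j\<in>insert j0 (insert a R). t j)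
      = QJ n M (insert a (insert j0 R)) (t a * (\<Prod>j\<in>insert j0 R. t j))"
    using insert by (simp add: insert_commute)
  also have "\<dots> \<le> QJ n M (insert j0 R) (\<Prod>j\<in>insert j0 R. t j) + t a * real (card (colvals n M a))"
    using insert by (intro QJ_insert_le) auto
  also have "\<dots> \<le> QJ n M {j0} (t j0) + (\<Sum>j\<in>insert a R. t j * real (card (colvals n M j)))"
    using insert by simp
  finally show ?case .
qed

theorem theorem1:
  fixes n d :: nat and M :: "nat \<Rightarrow> nat \<Rightarrow> 'a" and J :: "nat set"
    and t :: "nat \<Rightarrow> real" and jstar :: nat
  assumes "J \<subseteq> {..<d}" and "J \<noteq> {}"
    and "\<forall>j\<in>J. 0 \<le> t j \<and> t j \<le> 1"
    and "jstar \<in> J"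
  shows "QJ n M J (\<Prod>j\<in>J. t j)
    \<le> (\<Sum>j\<in>J. QJ n M {j} (t j))
       + (\<Sum>j\<in>J - {jstar}. t j * real (card (colvals n M j)))"
proof -
  have fin_J: "finite J" using assms(1) finite_subset by blast
  have "insert jstar (J - {jstar}) = J" using assms(4) by blast
  then have "QJ n M J (\<Prod>j\<in>J. t j)
      \<le> QJ n M {jstar} (t jstar) + (\<Sum>j\<in>J - {jstar}. t j * real (card (colvals n M j)))"
    using QJ_insert_prod_le[of "J - {jstar}" jstar t n M] fin_J assms(3) by simp
  moreover have "QJ n M {jstar} (t jstar) \<le> (\<Sum>j\<in>J. QJ n M {j} (t j))"
    by (rule member_le_sum) (simp_all add: QJ_nonneg fin_J assms(4))
  ultimately show ?thesis by linarith
qed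

end
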